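(* Let $\Omega := \{0,1\}^{\mathbb{Z}}$, let $\tau:\Omega\to\Omega$ be the shift $(\tau\omega)(x) := \omega(x-1)$, and let $T:\mathbb{Z}\to\mathbb{Z}$ be $Tx:=x+1$. Let $\Delta\notin\mathbb{Z}$ be an extra symbol and set $T(\Delta):=\Delta$. Then there exists a function $X:\Omega\to\mathbb{Z}\cup\{\Delta\}$ such that $X^{-1}\{\Delta\}$ is countable and $X(\tau\omega)=T(X(\omega))$ for all $\omega\in\Omega$.
   Context: The axiom of choice (equivalently, the well-ordering principle) is assumed. *)

theory Defs
  imports Main "HOL-Library.Countable_Set"
begin

text \<open>Omega = {0,1}^Z is modelled as int => bool (False = 0, True = 1).\<close>
type_synonym config = "int \<Rightarrow> bool"

definition tau :: "config \<Rightarrow> config" where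
  "tau \<omega> = (\<lambda>x. \<omega> (x - 1))"

text \<open>Z extended by Delta is modelled as int option, with None = Delta.
  T x = x + 1 on Z and T Delta = Delta.\<close>
definition T :: "int option \<Rightarrow> int option" where
  "T = map_option (\<lambda>x. x + 1)"

end

theory Submission
  imports Defs
begin

text \<open>Choose one reference point in every orbit of the \<open>\<int>\<close>-action generated by \<open>\<tau>\<close>.
  On an orbit without nontrivial stabiliser every point is \<open>\<tau>\<^sup>k\<close> of the reference point
  for a unique \<open>k\<close>, and that \<open>k\<close> is the required coordinate: applying \<open>\<tau>\<close> raises it by one.
  The remaining points are the periodic configurations; a configuration of period \<open>k > 0\<close>
  is determined by \<open>k\<close> and a word of length \<open>k\<close>, so there are only countably many.\<close>

locale int_action =
  fixes act :: "int \<Rightarrow> 'a \<Rightarrow> 'a"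
  assumes act_0 [simp]: "act 0 x = x"
    and act_add: "act (a + b) x = act a (act b x)"
begin

lemma act_neg_cancel [simp]: "act (- k) (act k x) = x"
  by (metis act_0 act_add add.left_inverse)

lemma act_mult_period:
  assumes "act k x = x"
  shows "act (m * k) x = x"
proof -
  have step: "act (j + k) x = act j x" for j
    by (simp add: act_add assms)
  show ?thesis
  proof (induction m rule: int_induct[where k = 0])
    case base
    show ?case by simp
  next
    case (step1 i)
    then show ?case
      using step[of "i * k"] by (simp add: distrib_right)
  next
    case (step2 i)
    then show ?case
      using step[of "(i - 1) * k"] by (simp add: left_diff_distrib)
  qed
qed

definition periodic :: "'a \<Rightarrow> bool" where
  "periodic x \<longleftrightarrow> (\<exists>k \<noteq> 0. act k x = x)"

lemma periodic_act_iff [simp]: "periodic (act m x) \<longleftrightarrow> periodic x"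
proof -
  have "act k (act m x) = act m x \<longleftrightarrow> act k x = x" for k
    by (metis act_add act_neg_cancel add.commute)
  then show ?thesis
    unfolding periodic_def by simp
qed

lemma act_eq_imp_eq:
  assumes "\<not> periodic x" and "act a x = act b x"
  shows "a = b"
proof (rule ccontr)
  assume "a \<noteq> b"
  have "act (a - b) x = act (- b) (act a x)"
    by (metis act_add add.commute uminus_add_conv_diff)
  also have "\<dots> = x"
    using assms(2) by simp
  finally have "act (a - b) x = x" .
  moreover have "a - b \<noteq> 0"
    using \<open>a \<noteq> b\<close> by simp
  ultimately show False
    using assms(1) unfolding periodic_def by blast
qed

definition orbit_rep :: "'a \<Rightarrow> 'a" where
  "orbit_rep x = (SOME y. \<exists>k. y = act k x)"

lemma orbit_rep_in_orbit: "\<exists>k. orbit_rep x = act k x"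
  unfolding orbit_rep_def by (rule someI[where x = x]) (metis act_0)

lemma orbit_rep_act [simp]: "orbit_rep (act m x) = orbit_rep x"
proof -
  have "(\<exists>k. y = act k (act m x)) \<longleftrightarrow> (\<exists>k. y = act k x)" for y
    by (metis act_add diff_add_cancel)
  then show ?thesis
    unfolding orbit_rep_def by simp
qed

definition coord :: "'a \<Rightarrow> int option" where
  "coord x = (if periodic x then None else Some (THE k. act k (orbit_rep x) = x))"

lemma coord_eq_None_iff: "coord x = None \<longleftrightarrow> periodic x"
  by (simp add: coord_def)

lemma coord_eqI:
  assumes "\<not> periodic x" and "act k (orbit_rep x) = x"
  shows "coord x = Some k"
proof -
  obtain j where "orbit_rep x = act j x"
    using orbit_rep_in_orbit by blast
  then have "\<not> periodic (orbit_rep x)"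
    using assms(1) by simp
  then have "(THE k. act k (orbit_rep x) = x) = k"
    using assms(2) act_eq_imp_eq by (intro the_equality) metis+
  then show ?thesis
    using assms(1) by (simp add: coord_def)
qed

lemma coord_act: "coord (act m x) = map_option (\<lambda>k. k + m) (coord x)"
proof (cases "periodic x")
  case True
  then show ?thesis by (simp add: coord_def)
next
  case False
  obtain j where j: "orbit_rep x = act j x"
    using orbit_rep_in_orbit by blast
  have "act (- j) (orbit_rep x) = x"
    using j by simp
  have "act (- j + m) (orbit_rep (act m x)) = act m x"
    using j by (metis act_add act_neg_cancel add.commute orbit_rep_act)
  then have "coord (act m x) = Some (- j + m)"
    using False by (intro coord_eqI) simp_all
  moreover have "coord x = Some (- j)"
    using False \<open>act (- j) (orbit_rep x) = x\<close> by (rule coord_eqI)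
  ultimately show ?thesis by simp
qed

end

definition shift :: "int \<Rightarrow> (int \<Rightarrow> 'b) \<Rightarrow> int \<Rightarrow> 'b" where
  "shift k \<omega> = (\<lambda>x. \<omega> (x - k))"

interpretation shift: int_action shift
  by unfold_locales (simp_all add: shift_def algebra_simps)

lemma tau_eq_shift_1: "tau = shift 1"
  by (simp add: fun_eq_iff tau_def shift_def)

lemma shift_period_mod:
  assumes "shift k \<omega> = \<omega>"
  shows "\<omega> (x mod k) = \<omega> x"
proof -
  have "shift ((x div k) * k) \<omega> x = \<omega> x"
    using shift.act_mult_period[OF assms] by simp
  then show ?thesis
    by (simp add: shift_def minus_div_mult_eq_mod)
qed

lemma countable_periodic:
  "countable {\<omega> :: int \<Rightarrow> 'b :: countable. shift.periodic \<omega>}"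
proof -
  let ?from_word = "\<lambda>(k, w :: 'b list). \<lambda>x. w ! nat (x mod k)"
  have "\<omega> \<in> range ?from_word" if per: "shift.periodic \<omega>" for \<omega> :: "int \<Rightarrow> 'b"
  proof -
    obtain k where "k \<noteq> 0" "shift k \<omega> = \<omega>"
      using per unfolding shift.periodic_def by blast
    then have "0 < \<bar>k\<bar>" "shift \<bar>k\<bar> \<omega> = \<omega>"
      using shift.act_mult_period[of k \<omega> "-1"] by (simp_all add: abs_if)
    then have "\<omega> = ?from_word (\<bar>k\<bar>, map (\<lambda>i. \<omega> (int i)) [0..<nat \<bar>k\<bar>])"
      by (auto simp: fun_eq_iff shift_period_mod nat_less_iff)
    then show ?thesis by blast
  qed
  then show ?thesis
    by (blast intro: countable_subset[OF _ countable_image[OF countableI_type]])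
qed

theorem lemma3:
  shows "\<exists>X :: config \<Rightarrow> int option.
           countable (X -` {None}) \<and> (\<forall>\<omega>. X (tau \<omega>) = T (X \<omega>))"
proof (intro exI conjI allI)
  show "countable (shift.coord -` {None} :: config set)"
    using countable_periodic by (simp add: vimage_def shift.coord_eq_None_iff)
  show "shift.coord (tau \<omega>) = T (shift.coord \<omega>)" for \<omega>
    by (simp add: tau_eq_shift_1 shift.coord_act T_def)
qed

end
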